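(* Let $R\in(0,\pi)$ and let $\Omega_R\subset\mathbb{S}^2$ be the closed spherical cap of geodesic radius $R$ centered at the north pole. Let $$\mathfrak{C}_{\Omega_R}=\{u\colon\overline{\Omega_R}\to [0,\infty) \;:\; u|_{\partial\Omega_R}=0,\ u \text{ piecewise } C^1\}.$$ Then $\inf\{R_1[u]\colon u\in\mathfrak{C}_{\Omega_R}\}=0$. Consequently, $R_1$ has no minimizer in $\mathfrak{C}_{\Omega_R}$.
   Context: On $\mathbb{S}^2$ use spherical coordinates $\Psi(\theta,\phi)=(\sin\theta\cos\phi,\sin\theta\sin\phi,\cos\theta)$, $\theta\in[0,\pi]$, $\phi\in[0,2\pi)$, with round metric $d\theta^2+\sin^2\theta\,d\phi^2$, area element $d\Omega=\sin\theta\,d\theta\,d\phi$, and $|\nabla_{\mathbb{S}^2}u|^2=u_\theta^2+u_\phi^2/\sin^2\theta$. A function $u$ on a domain $\Omega\subset\mathbb{S}^2$ describes the radial graph $\{e^{u(\xi)}\xi:\xi\in\Omega\}$. The (scale-invariant free expansion) resistance functional is $$R_1[u]=\int_{\Omega}\frac{1}{1+|\nabla_{\mathbb{S}^2}u|^2}\,d\Omega.$$ *)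

theory Defs
  imports "HOL-Analysis.Analysis"
begin

definition Psi :: "real \<times> real \<Rightarrow> real^3" where
  "Psi p = vector [sin (fst p) * cos (snd p), sin (fst p) * sin (snd p), cos (fst p)]"

definition sphere2 :: "(real^3) set" where
  "sphere2 = {x. norm x = 1}"

definition cap :: "real \<Rightarrow> (real^3) set" where
  "cap R = {x \<in> sphere2. x $ 3 \<ge> cos R}"

definition cap_boundary :: "real \<Rightarrow> (real^3) set" where
  "cap_boundary R = {x \<in> sphere2. x $ 3 = cos R}"

definition sph_interior :: "(real^3) set \<Rightarrow> (real^3) set" where
  "sph_interior P = {x \<in> P. \<exists>U. open U \<and> x \<in> U \<and> U \<inter> sphere2 \<subseteq> P}"

definition C1_on_set :: "(real^3) set \<Rightarrow> (real^3 \<Rightarrow> real) \<Rightarrow> bool" where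
  "C1_on_set P u \<longleftrightarrow> (\<exists>U g (g' :: real^3 \<Rightarrow> (real^3) \<Rightarrow>\<^sub>L real).
      open U \<and> P \<subseteq> U \<and>
      (\<forall>x\<in>U. (g has_derivative blinfun_apply (g' x)) (at x)) \<and>
      continuous_on U g' \<and> (\<forall>x\<in>P. g x = u x))"

definition piecewise_C1_on :: "(real^3) set \<Rightarrow> (real^3 \<Rightarrow> real) \<Rightarrow> bool" where
  "piecewise_C1_on S u \<longleftrightarrow> continuous_on S u \<and>
     (\<exists>F. finite F \<and> \<Union>F = S \<and>
        (\<forall>P\<in>F. closed P \<and> C1_on_set P u \<and>
           negligible {p \<in> cbox (0, 0) (pi, 2 * pi). Psi p \<in> P - sph_interior P}))"

definition admissible :: "real \<Rightarrow> (real^3 \<Rightarrow> real) set" where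
  "admissible R = {u. piecewise_C1_on (cap R) u \<and> (\<forall>x\<in>cap R. 0 \<le> u x) \<and>
                      (\<forall>x\<in>cap_boundary R. u x = 0)}"

text \<open>The functional R_1 over the cap, written in spherical coordinates:
  |grad u|^2 = u_theta^2 + u_phi^2 / sin^2 theta, area element sin theta dtheta dphi.\<close>
definition R1 :: "real \<Rightarrow> (real^3 \<Rightarrow> real) \<Rightarrow> real" where
  "R1 R u = integral (cbox (0, 0) (R, 2 * pi))
     (\<lambda>p. sin (fst p) /
        (1 + (deriv (\<lambda>t. u (Psi (t, snd p))) (fst p))\<^sup>2
           + (deriv (\<lambda>s. u (Psi (fst p, s))) (snd p))\<^sup>2 / (sin (fst p))\<^sup>2))"

end

theory Submission
  imports Defs
begin

text \<open>
  The integrand \<open>sin \<theta> / (1 + |\<nabla>u|\<^sup>2)\<close> is strictly positive wherever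
  \<open>sin \<theta> > 0\<close>, so \<open>R\<^sub>1[u] > 0\<close> for every admissible \<open>u\<close>. Since the integral
  is a Henstock-Kurzweil integral, which is \<open>0\<close> for non-integrable functions, this needs
  integrability: piecewise \<open>C\<^sup>1\<close> regularity makes the integrand the almost-everywhere
  limit of its continuous difference-quotient versions, hence measurable, and it is bounded.
  On the other hand the steep profiles \<open>u\<^sub>k = k (x\<^sub>3 - cos R)\<close> have
  \<open>|\<nabla>u\<^sub>k| = k sin \<theta>\<close>, and \<open>s / (1 + k\<^sup>2 s\<^sup>2) \<le> 1 / (2 k)\<close> gives
  \<open>R\<^sub>1[u\<^sub>k] \<le> \<pi> R / k \<rightarrow> 0\<close>.
\<close>

lemma Psi_eq_axis_sum:
  "Psi p = (sin (fst p) * cos (snd p)) *\<^sub>R axis 1 1 + (sin (fst p) * sin (snd p)) *\<^sub>R axis 2 1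
     + cos (fst p) *\<^sub>R axis 3 (1::real)"
  unfolding Psi_def by (simp add: vec_eq_iff forall_3 vector_3 axis_def)

lemma Psi_nth_3 [simp]: "Psi p $ 3 = cos (fst p)"
  unfolding Psi_def by simp

lemma norm_Psi [simp]: "norm (Psi p) = 1"
proof -
  have "(sin (fst p) * cos (snd p))\<^sup>2 + (sin (fst p) * sin (snd p))\<^sup>2
      = (sin (fst p))\<^sup>2 * ((sin (snd p))\<^sup>2 + (cos (snd p))\<^sup>2)"
    by (simp only: power_mult_distrib distrib_left add.commute)
  then show ?thesis
    by (simp add: Psi_def norm_vec_def L2_set_def sum_3)
qed

lemma Psi_in_sphere2 [simp]: "Psi p \<in> sphere2"
  by (simp add: sphere2_def)

lemma continuous_on_Psi: "continuous_on A Psi"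
  unfolding Psi_eq_axis_sum by (intro continuous_intros)

lemma differentiable_Psi_theta: "(\<lambda>t. Psi (t, s)) differentiable (at t)"
  unfolding Psi_eq_axis_sum fst_conv snd_conv
  by (intro derivative_intros) (auto simp: real_differentiable_def intro: DERIV_sin DERIV_cos)

lemma differentiable_Psi_phi: "(\<lambda>s. Psi (t, s)) differentiable (at s)"
  unfolding Psi_eq_axis_sum fst_conv snd_conv
  by (intro derivative_intros) (auto simp: real_differentiable_def intro: DERIV_sin DERIV_cos)

lemma mem_cbox_pair_iff:
  "p \<in> cbox (a, b) (c, d) \<longleftrightarrow> a \<le> fst p \<and> fst p \<le> c \<and> b \<le> snd p \<and> snd p \<le> d"
  for a b c d :: real
  by (cases p) (simp add: cbox_Pair_iff)

lemma negligible_fst_eq: "negligible {p :: real \<times> real. fst p = c}"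
proof -
  have "{p :: real \<times> real. fst p = c} = {p. (1, 0) \<bullet> p = c}"
    by (simp add: inner_prod_def)
  then show ?thesis
    using negligible_hyperplane[of "(1::real, 0::real)" c] by (simp add: zero_prod_def)
qed

lemma Psi_in_cap:
  assumes "\<bar>fst p\<bar> \<le> R" "R \<le> pi"
  shows "Psi p \<in> cap R"
proof -
  have "cos R \<le> cos \<bar>fst p\<bar>"
    using assms by (intro cos_monotone_0_pi_le) auto
  then show ?thesis by (simp add: cap_def)
qed

lemma closed_cap: "closed (cap R)"
proof -
  have "cap R = sphere 0 1 \<inter> {x. cos R \<le> x $ 3}"
    by (auto simp: cap_def sphere2_def)
  then show ?thesis
    by (simp add: closed_Int closed_halfspace_component_ge_cart)
qed

lemma sph_interior_cap: "{x \<in> sphere2. cos R < x $ 3} \<subseteq> sph_interior (cap R)"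
proof
  fix x
  assume x: "x \<in> {x \<in> sphere2. cos R < x $ 3}"
  have "open {y::real^3. cos R < y $ 3}"
    by (rule open_halfspace_component_gt_cart)
  with x show "x \<in> sph_interior (cap R)"
    unfolding sph_interior_def cap_def by auto
qed

lemma negligible_Psi_preimage_cap_boundary:
  assumes "0 \<le> R" "R \<le> pi"
  shows "negligible {p \<in> cbox (0, 0) (pi, 2 * pi). Psi p \<in> cap R - sph_interior (cap R)}"
proof (rule negligible_subset[OF negligible_fst_eq])
  show "{p \<in> cbox (0, 0) (pi, 2 * pi). Psi p \<in> cap R - sph_interior (cap R)} \<subseteq> {p. fst p = R}"
  proof
    fix p
    assume p: "p \<in> {p \<in> cbox (0, 0) (pi, 2 * pi). Psi p \<in> cap R - sph_interior (cap R)}"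
    then have "cos (fst p) = cos R"
      using sph_interior_cap[of R] by (force simp: cap_def)
    moreover have "0 \<le> fst p" "fst p \<le> pi"
      using p by (auto simp: mem_cbox_pair_iff)
    ultimately show "p \<in> {p. fst p = R}"
      using assms cos_inj_pi by auto
  qed
qed

lemma C1_on_set_affine:
  assumes "bounded_linear f"
  shows "C1_on_set P (\<lambda>x. f x + c)"
  unfolding C1_on_set_def
proof (intro exI conjI)
  show "\<forall>x\<in>UNIV. ((\<lambda>x. f x + c) has_derivative blinfun_apply (Blinfun f)) (at x)"
    using assms
    by (auto intro!: derivative_eq_intros bounded_linear_imp_has_derivative
        simp: bounded_linear_Blinfun_apply)
qed auto

lemma differentiable_along_curve_in_sph_interior:
  fixes \<gamma> :: "real \<Rightarrow> real^3"
  assumes u: "C1_on_set P u" and t0: "\<gamma> t0 \<in> sph_interior P"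
    and \<gamma>: "\<gamma> differentiable (at t0)" "\<And>t. \<gamma> t \<in> sphere2"
  shows "(\<lambda>t. u (\<gamma> t)) differentiable (at t0)"
proof -
  obtain U where U: "open U" "\<gamma> t0 \<in> U" "U \<inter> sphere2 \<subseteq> P"
    using t0 unfolding sph_interior_def by blast
  obtain V g and g' :: "real^3 \<Rightarrow> (real^3) \<Rightarrow>\<^sub>L real" where
    g: "P \<subseteq> V" "\<forall>x\<in>V. (g has_derivative blinfun_apply (g' x)) (at x)" "\<forall>x\<in>P. g x = u x"
    using u unfolding C1_on_set_def by blast
  have "g differentiable (at (\<gamma> t0))"
    using g U t0 unfolding sph_interior_def differentiable_def by blast
  with \<gamma>(1) have "(\<lambda>t. g (\<gamma> t)) differentiable (at t0)"
    by (rule differentiable_chain_at[unfolded o_def])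
  moreover have "\<forall>\<^sub>F t in at t0. \<gamma> t \<in> U"
    using differentiable_imp_continuous_within[OF \<gamma>(1)] U(1,2)
    by (simp add: continuous_within topological_tendstoD)
  then have "\<forall>\<^sub>F t in at t0. g (\<gamma> t) = u (\<gamma> t)"
    by eventually_elim (use U g \<gamma>(2) in blast)
  moreover have "g (\<gamma> t0) = u (\<gamma> t0)"
    using U g \<gamma>(2) by blast
  ultimately show ?thesis
    unfolding differentiable_def by (blast intro: has_derivative_transform_eventually)
qed

lemma piecewise_C1_on_differentiable_ae:
  assumes "piecewise_C1_on S u"
  obtains N where "negligible N"
    "\<And>p. p \<in> cbox (0, 0) (pi, 2 * pi) - N \<Longrightarrow> Psi p \<in> S \<Longrightarrow>
       (\<lambda>t. u (Psi (t, snd p))) differentiable (at (fst p)) \<and>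
       (\<lambda>s. u (Psi (fst p, s))) differentiable (at (snd p))"
proof -
  obtain F where F: "finite F" "\<Union>F = S" "\<And>P. P \<in> F \<Longrightarrow> C1_on_set P u"
    "\<And>P. P \<in> F \<Longrightarrow> negligible {p \<in> cbox (0, 0) (pi, 2 * pi). Psi p \<in> P - sph_interior P}"
    using assms unfolding piecewise_C1_on_def by blast
  define N where "N = (\<Union>P\<in>F. {p \<in> cbox (0, 0) (pi, 2 * pi). Psi p \<in> P - sph_interior P})"
  show thesis
  proof
    show "negligible N"
      unfolding N_def using F(1,4) by (intro negligible_Union) auto
  next
    fix p
    assume p: "p \<in> cbox (0, 0) (pi, 2 * pi) - N" "Psi p \<in> S"
    then obtain P where P: "P \<in> F" "Psi p \<in> sph_interior P"
      using F(2) unfolding N_def by blast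
    show "(\<lambda>t. u (Psi (t, snd p))) differentiable (at (fst p)) \<and>
       (\<lambda>s. u (Psi (fst p, s))) differentiable (at (snd p))"
      using differentiable_along_curve_in_sph_interior[OF F(3)[OF P(1)]] P(2)
        differentiable_Psi_theta differentiable_Psi_phi Psi_in_sphere2
      by simp
  qed
qed

definition resistance_density :: "real \<Rightarrow> real \<Rightarrow> real \<Rightarrow> real" where
  "resistance_density \<theta> a b = sin \<theta> / (1 + a\<^sup>2 + b\<^sup>2 / (sin \<theta>)\<^sup>2)"

lemma resistance_density_denominator_ge_1: "1 \<le> 1 + a\<^sup>2 + b\<^sup>2 / (sin \<theta>)\<^sup>2"
  for a b \<theta> :: real
proof -
  have "0 \<le> b\<^sup>2 / (sin \<theta>)\<^sup>2"
    by (intro divide_nonneg_nonneg) simp_all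
  then show ?thesis
    using zero_le_power2[of a] by linarith
qed

lemma resistance_density_eq_divide:
  obtains d where "1 \<le> d" "resistance_density \<theta> a b = sin \<theta> / d"
proof (rule that)
  show "1 \<le> 1 + a\<^sup>2 + b\<^sup>2 / (sin \<theta>)\<^sup>2"
    by (rule resistance_density_denominator_ge_1)
qed (simp add: resistance_density_def)

lemma abs_resistance_density_le: "\<bar>resistance_density \<theta> a b\<bar> \<le> \<bar>sin \<theta>\<bar>"
proof -
  obtain d where "1 \<le> d" "resistance_density \<theta> a b = sin \<theta> / d"
    by (rule resistance_density_eq_divide)
  then show ?thesis
    using divide_left_mono[of 1 d "\<bar>sin \<theta>\<bar>"] by (simp add: abs_divide)
qed

lemma resistance_density_nonneg: "0 \<le> sin \<theta> \<Longrightarrow> 0 \<le> resistance_density \<theta> a b"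
  by (rule resistance_density_eq_divide[of \<theta> a b]) simp

lemma resistance_density_pos: "0 < sin \<theta> \<Longrightarrow> 0 < resistance_density \<theta> a b"
  by (rule resistance_density_eq_divide[of \<theta> a b]) simp

lemma resistance_density_steep_le:
  assumes "0 < k"
  shows "resistance_density \<theta> (k * sin \<theta>) 0 \<le> 1 / (2 * k)"
proof -
  have "sin \<theta> * (2 * k) \<le> 1 + (k * sin \<theta>)\<^sup>2"
    using zero_le_power2[of "k * sin \<theta> - 1"] by (simp add: power2_eq_square algebra_simps)
  then have "sin \<theta> \<le> 1 / (2 * k) * (1 + (k * sin \<theta>)\<^sup>2)"
    using assms by (simp add: field_simps)
  then show ?thesis
    by (simp add: resistance_density_def pos_divide_le_eq add_pos_nonneg)
qed

lemma tendsto_resistance_density [tendsto_intros]: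
  assumes f: "(f \<longlongrightarrow> \<theta>) F" and g: "(g \<longlongrightarrow> a) F" and h: "(h \<longlongrightarrow> b) F"
  shows "((\<lambda>x. resistance_density (f x) (g x) (h x)) \<longlongrightarrow> resistance_density \<theta> a b) F"
proof -
  have sin_f: "((\<lambda>x. sin (f x)) \<longlongrightarrow> sin \<theta>) F"
    by (rule isCont_tendsto_compose[OF isCont_sin f])
  show ?thesis
  proof (cases "sin \<theta> = 0")
    case True
    have "((\<lambda>x. \<bar>sin (f x)\<bar>) \<longlongrightarrow> \<bar>sin \<theta>\<bar>) F"
      by (intro tendsto_intros sin_f)
    then have "((\<lambda>x. \<bar>sin (f x)\<bar>) \<longlongrightarrow> 0) F"
      using True by simp
    then have "((\<lambda>x. resistance_density (f x) (g x) (h x)) \<longlongrightarrow> 0) F"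
      by (rule Lim_null_comparison[rotated]) (simp add: abs_resistance_density_le)
    then show ?thesis
      using True by (simp add: resistance_density_def)
  next
    case False
    then show ?thesis
      unfolding resistance_density_def
      using resistance_density_denominator_ge_1[of a b \<theta>]
      by (intro tendsto_intros sin_f g h) (simp, linarith)
  qed
qed

lemma continuous_on_resistance_density [continuous_intros]:
  assumes "continuous_on S f" "continuous_on S g" "continuous_on S h"
  shows "continuous_on S (\<lambda>x. resistance_density (f x) (g x) (h x))"
  using assms unfolding continuous_on_def by (blast intro: tendsto_resistance_density)

definition R1_integrand :: "(real^3 \<Rightarrow> real) \<Rightarrow> real \<times> real \<Rightarrow> real" where
  "R1_integrand u p = resistance_density (fst p)
     (deriv (\<lambda>t. u (Psi (t, snd p))) (fst p)) (deriv (\<lambda>s. u (Psi (fst p, s))) (snd p))"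

lemma R1_eq_integral: "R1 R u = integral (cbox (0, 0) (R, 2 * pi)) (R1_integrand u)"
  unfolding R1_def R1_integrand_def resistance_density_def ..

lemma DERIV_difference_quotient_LIMSEQ:
  fixes f :: "real \<Rightarrow> real"
  assumes "(f has_real_derivative D) (at x)" "h \<longlonglongrightarrow> 0" "\<And>n. h n \<noteq> 0"
  shows "(\<lambda>n. (f (x + h n) - f x) / h n) \<longlonglongrightarrow> D"
proof -
  have "((\<lambda>t. (f (x + t) - f x) / t) \<longlongrightarrow> D) (at 0)"
    using assms(1) by (simp add: DERIV_def)
  moreover have "filterlim h (at 0) sequentially"
    using assms(2,3) by (simp add: filterlim_at)
  ultimately show ?thesis
    by (rule filterlim_compose)
qed

lemma continuous_on_compose_Psi_cap:
  assumes u: "continuous_on (cap R) u" and R: "R \<le> pi"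
    and f: "continuous_on S f" "\<And>x. x \<in> S \<Longrightarrow> \<bar>fst (f x)\<bar> \<le> R"
  shows "continuous_on S (\<lambda>x. u (Psi (f x)))"
  using f R
  by (intro continuous_on_compose2[OF u continuous_on_compose2[OF continuous_on_Psi f(1)]])
    (auto intro: Psi_in_cap)

lemma R1_integrand_measurable_on:
  assumes R: "0 < R" "R \<le> pi" and u: "continuous_on (cap R) u" and N: "negligible N"
    and diff: "\<And>p. p \<in> cbox (0, 0) (R, 2 * pi) - N \<Longrightarrow>
       (\<lambda>t. u (Psi (t, snd p))) differentiable (at (fst p)) \<and>
       (\<lambda>s. u (Psi (fst p, s))) differentiable (at (snd p))"
  shows "R1_integrand u measurable_on cbox (0, 0) (R, 2 * pi)"
proof -
  define h where "h n = - R / Suc n" for n :: nat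
  have h_lim: "h \<longlonglongrightarrow> 0"
    unfolding h_def using LIMSEQ_Suc[OF lim_const_over_n[of "- R"]] by simp
  have h: "h n \<noteq> 0" "- R \<le> h n" "h n \<le> 0" for n
    using R by (auto simp: h_def field_simps)
  \<comment> \<open>Backward differences keep the sample points inside the cap, where \<open>u\<close> is continuous.\<close>
  define q where "q n p = resistance_density (fst p)
      ((u (Psi (fst p + h n, snd p)) - u (Psi (fst p, snd p))) / h n)
      ((u (Psi (fst p, snd p + h n)) - u (Psi (fst p, snd p))) / h n)" for n p
  have "continuous_on (cbox (0, 0) (R, 2 * pi)) (q n)" for n
    unfolding q_def using h[of n]
    by (intro continuous_intros continuous_on_compose_Psi_cap[OF u R(2)])
      (auto simp: mem_cbox_pair_iff)
  then have "q n measurable_on cbox (0, 0) (R, 2 * pi)" for n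
    by (simp add: measurable_on_iff_borel_measurable continuous_imp_measurable_on_sets_lebesgue)
  moreover have "(\<lambda>n. q n p) \<longlonglongrightarrow> R1_integrand u p" if p: "p \<in> cbox (0, 0) (R, 2 * pi) - N" for p
  proof -
    obtain D1 D2 where
      D1: "((\<lambda>t. u (Psi (t, snd p))) has_real_derivative D1) (at (fst p))" and
      D2: "((\<lambda>s. u (Psi (fst p, s))) has_real_derivative D2) (at (snd p))"
      using diff[OF p] by (auto simp: real_differentiable_def)
    have "(\<lambda>n. q n p) \<longlonglongrightarrow> resistance_density (fst p) D1 D2"
      unfolding q_def using h
      by (intro tendsto_resistance_density tendsto_const h_lim
          DERIV_difference_quotient_LIMSEQ[OF D1] DERIV_difference_quotient_LIMSEQ[OF D2])
    then show ?thesis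
      by (simp add: R1_integrand_def DERIV_imp_deriv[OF D1] DERIV_imp_deriv[OF D2])
  qed
  ultimately show ?thesis
    by (rule measurable_on_limit[OF _ N])
qed

lemma integral_pos_if_ae_pos:
  fixes f :: "'a::euclidean_space \<Rightarrow> real"
  assumes f: "f integrable_on S" "\<And>x. x \<in> S \<Longrightarrow> 0 \<le> f x"
    and N: "negligible N" "\<And>x. x \<in> S - N \<Longrightarrow> 0 < f x" and S: "\<not> negligible S"
  shows "0 < integral S f"
proof -
  have "integral S f \<noteq> 0"
  proof
    assume "integral S f = 0"
    define g where "g x = (if x \<in> S then f x else 0)" for x
    have g_int: "(g has_integral 0) UNIV"
      unfolding g_def has_integral_restrict_UNIV
      using integrable_integral[OF f(1)] \<open>integral S f = 0\<close> by simp
    have "0 \<le> g x" for x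
      using f(2) by (simp add: g_def)
    then have g_meas: "g \<in> borel_measurable lebesgue"
      and "(\<integral>\<^sup>+x. ennreal (g x) \<partial>lebesgue) = 0"
      using has_integral_iff_nn_integral_lebesgue[of g 0] g_int by simp_all
    then have "AE x in lebesgue. ennreal (g x) = 0"
      using nn_integral_0_iff_AE measurable_compose[OF g_meas measurable_ennreal] by blast
    then obtain M where M: "negligible M" "{x. ennreal (g x) \<noteq> 0} \<subseteq> M"
      by (auto simp: eventually_ae_filter_negligible)
    have "S \<subseteq> M \<union> N"
    proof
      fix x
      assume "x \<in> S"
      then have "x \<notin> N \<Longrightarrow> ennreal (g x) \<noteq> 0"
        using N(2)[of x] by (simp add: g_def)
      then show "x \<in> M \<union> N"
        using M(2) by blast
    qed
    then show False
      using S M(1) N(1) negligible_Un negligible_subset by blast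
  qed
  then show ?thesis
    using integral_nonneg[OF f] by linarith
qed

lemma admissible_R1_integrand_integrable:
  assumes R: "0 < R" "R \<le> pi" and u: "u \<in> admissible R"
  shows "R1_integrand u integrable_on cbox (0, 0) (R, 2 * pi)"
proof -
  have cont: "continuous_on (cap R) u" and pw: "piecewise_C1_on (cap R) u"
    using u by (auto simp: admissible_def piecewise_C1_on_def)
  obtain N where N: "negligible N" and diff:
    "\<And>p. p \<in> cbox (0, 0) (pi, 2 * pi) - N \<Longrightarrow> Psi p \<in> cap R \<Longrightarrow>
       (\<lambda>t. u (Psi (t, snd p))) differentiable (at (fst p)) \<and>
       (\<lambda>s. u (Psi (fst p, s))) differentiable (at (snd p))"
    using piecewise_C1_on_differentiable_ae[OF pw] by blast
  have S: "cbox (0, 0) (R, 2 * pi) \<in> sets lebesgue"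
    by (simp add: fmeasurableD)
  have "R1_integrand u measurable_on cbox (0, 0) (R, 2 * pi)"
  proof (rule R1_integrand_measurable_on[OF R cont N])
    fix p
    assume "p \<in> cbox (0, 0) (R, 2 * pi) - N"
    then have "p \<in> cbox (0, 0) (pi, 2 * pi) - N" "Psi p \<in> cap R"
      using R by (auto simp: mem_cbox_pair_iff intro!: Psi_in_cap)
    then show "(\<lambda>t. u (Psi (t, snd p))) differentiable (at (fst p)) \<and>
       (\<lambda>s. u (Psi (fst p, s))) differentiable (at (snd p))"
      by (rule diff)
  qed
  then show ?thesis
  proof (rule measurable_bounded_by_integrable_imp_integrable[OF _ integrable_const _ S,
        unfolded measurable_on_iff_borel_measurable[OF S, symmetric]])
    show "norm (R1_integrand u p) \<le> 1" for p
      using abs_resistance_density_le[of "fst p"] abs_sin_le_one[of "fst p"]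
      unfolding R1_integrand_def real_norm_def by (rule order_trans)
  qed
qed

lemma admissible_R1_pos:
  assumes R: "0 < R" "R < pi" and u: "u \<in> admissible R"
  shows "0 < R1 R u"
  unfolding R1_eq_integral
proof (rule integral_pos_if_ae_pos)
  show "R1_integrand u integrable_on cbox (0, 0) (R, 2 * pi)"
    using admissible_R1_integrand_integrable R u by simp
  show "0 \<le> R1_integrand u p" if "p \<in> cbox (0, 0) (R, 2 * pi)" for p
  proof -
    have "0 \<le> fst p" "fst p \<le> pi"
      using that R by (auto simp: mem_cbox_pair_iff)
    then show ?thesis
      unfolding R1_integrand_def by (intro resistance_density_nonneg sin_ge_zero)
  qed
  show "negligible {p :: real \<times> real. fst p = 0}"
    by (rule negligible_fst_eq)
  show "0 < R1_integrand u p" if "p \<in> cbox (0, 0) (R, 2 * pi) - {p. fst p = 0}" for p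
  proof -
    have "0 < fst p" "fst p < pi"
      using that R by (auto simp: mem_cbox_pair_iff)
    then show ?thesis
      unfolding R1_integrand_def by (intro resistance_density_pos sin_gt_zero)
  qed
  have "(R / 2, pi) \<in> box (0, 0) (R, 2 * pi)"
    using R by (simp add: mem_box Basis_prod_def)
  then have "\<not> negligible (box (0, 0) (R, 2 * pi))"
    using open_not_negligible[OF open_box] by blast
  then show "\<not> negligible (cbox (0, 0) (R, 2 * pi))"
    using box_subset_cbox negligible_subset by blast
qed

definition height :: "real \<Rightarrow> real \<Rightarrow> real^3 \<Rightarrow> real" where
  "height R k x = k * (x $ 3 - cos R)"

lemma height_admissible:
  assumes R: "0 \<le> R" "R \<le> pi" and k: "0 \<le> k"
  shows "height R k \<in> admissible R"
proof -
  have "bounded_linear (\<lambda>x::real^3. k * x $ 3)"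
    by (intro bounded_linear_intros bounded_linear_vec_nth)
  then have "C1_on_set (cap R) (\<lambda>x. k * x $ 3 + - k * cos R)"
    by (rule C1_on_set_affine)
  moreover have "height R k = (\<lambda>x. k * x $ 3 + - k * cos R)"
    by (simp add: fun_eq_iff height_def algebra_simps)
  ultimately have "C1_on_set (cap R) (height R k)"
    by simp
  moreover have "continuous_on (cap R) (height R k)"
    unfolding height_def by (intro continuous_intros)
  ultimately show ?thesis
    unfolding admissible_def piecewise_C1_on_def
    using closed_cap negligible_Psi_preimage_cap_boundary[OF R] k
    by (intro CollectI conjI exI[of _ "{cap R}"])
      (auto simp: cap_def cap_boundary_def height_def)
qed

lemma R1_height_le:
  assumes R: "0 < R" "R \<le> pi" and k: "0 < k"
  shows "R1 R (height R k) \<le> pi * R / k"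
proof -
  have "R1_integrand (height R k) p = resistance_density (fst p) (k * sin (fst p)) 0" for p
  proof -
    have "((\<lambda>t. height R k (Psi (t, snd p))) has_real_derivative - k * sin (fst p)) (at (fst p))"
      unfolding height_def Psi_nth_3 fst_conv by (auto intro!: derivative_eq_intros)
    moreover have "((\<lambda>s. height R k (Psi (fst p, s))) has_real_derivative 0) (at (snd p))"
      unfolding height_def Psi_nth_3 fst_conv by (auto intro!: derivative_eq_intros)
    ultimately show ?thesis
      by (simp add: R1_integrand_def resistance_density_def DERIV_imp_deriv)
  qed
  then have "R1 R (height R k) \<le> integral (cbox (0, 0) (R, 2 * pi)) (\<lambda>_. 1 / (2 * k))"
    unfolding R1_eq_integral
    using admissible_R1_integrand_integrable[OF R height_admissible] R k
    by (intro integral_le) (auto simp: resistance_density_steep_le)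
  also have "\<dots> = pi * R / k"
    using R k by (simp add: content_Pair field_simps)
  finally show ?thesis .
qed

lemma INF_eq_0_without_minimum:
  fixes f :: "'a \<Rightarrow> real"
  assumes pos: "\<And>x. x \<in> A \<Longrightarrow> 0 < f x" and small: "\<And>e. 0 < e \<Longrightarrow> \<exists>x\<in>A. f x < e"
  shows "(INF x\<in>A. f x) = 0 \<and> \<not> (\<exists>x\<in>A. \<forall>y\<in>A. f x \<le> f y)"
proof
  have "A \<noteq> {}"
    using small[of 1] by auto
  then have "0 \<le> (INF x\<in>A. f x)"
    using pos by (intro cINF_greatest) (auto intro: less_imp_le)
  moreover have "\<not> 0 < (INF x\<in>A. f x)"
  proof
    assume "0 < (INF x\<in>A. f x)"
    then obtain x where "x \<in> A" "f x < (INF x\<in>A. f x)"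
      using small by blast
    moreover have "bdd_below (f ` A)"
      using pos by (intro bdd_belowI[of _ 0]) (auto intro: less_imp_le)
    ultimately show False
      using cINF_lower[of f A x] by simp
  qed
  ultimately show "(INF x\<in>A. f x) = 0"
    by simp
  show "\<not> (\<exists>x\<in>A. \<forall>y\<in>A. f x \<le> f y)"
    using pos small by (meson not_le)
qed

theorem proposition2p5:
  fixes R :: real
  assumes "0 < R" and "R < pi"
  shows "(INF u \<in> admissible R. R1 R u) = 0 \<and>
         \<not> (\<exists>u \<in> admissible R. \<forall>v \<in> admissible R. R1 R u \<le> R1 R v)"
proof (rule INF_eq_0_without_minimum)
  show "0 < R1 R u" if "u \<in> admissible R" for u
    using admissible_R1_pos[OF assms that] .
  fix e :: real
  assume "0 < e"
  define k where "k = 2 * pi * R / e"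
  have "0 < k"
    using assms \<open>0 < e\<close> by (simp add: k_def)
  have "R1 R (height R k) \<le> pi * R / k"
    using R1_height_le[OF assms(1) _ \<open>0 < k\<close>] assms(2) by simp
  also have "\<dots> = e / 2"
    using assms \<open>0 < e\<close> by (simp add: k_def field_simps)
  also have "\<dots> < e"
    using \<open>0 < e\<close> by simp
  finally have "R1 R (height R k) < e" .
  moreover have "height R k \<in> admissible R"
    using assms \<open>0 < k\<close> by (intro height_admissible) auto
  ultimately show "\<exists>u\<in>admissible R. R1 R u < e"
    by blast
qed

end
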